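(* Let $A, B, C, F \in \mathbb{R}^{n\times n}$ with $B$ and $C$ invertible, and suppose $\sigma_{\min}(B^{-1}AC^{-1}) > 1$. Then the matrix equation $$AX + B\lvert CX\rvert = F$$ has exactly one solution $X \in \mathbb{R}^{n\times n}$.
   Context: $\sigma_{\min}(\cdot)$ is the smallest singular value and $\lvert M\rvert$ the entrywise absolute value of a matrix $M$. *)

theory Defs
  imports "HOL-Analysis.Analysis"
begin

definition eigenvalues_mat :: "real^'n^'n \<Rightarrow> real set" where
  "eigenvalues_mat M = {c. \<exists>v. v \<noteq> 0 \<and> M *v v = c *\<^sub>R v}"

definition sigma_min :: "real^'n^'n \<Rightarrow> real" where
  "sigma_min M = sqrt (Min (eigenvalues_mat (transpose M ** M)))"

definition mat_abs :: "real^'n^'m \<Rightarrow> real^'n^'m" where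
  "mat_abs M = (\<chi> i j. \<bar>M $ i $ j\<bar>)"

end

theory Submission
  imports Defs
begin

text \<open>With \<open>M = B\<^sup>-\<^sup>1 A C\<^sup>-\<^sup>1\<close> and \<open>Y = C X\<close> the equation reads
\<open>M Y + \<bar>Y\<bar> = B\<^sup>-\<^sup>1 F\<close>. In the Frobenius norm \<open>\<parallel>M Y\<parallel> \<ge> \<sigma>\<^sub>m\<^sub>i\<^sub>n(M) \<parallel>Y\<parallel>\<close>,
since \<open>\<sigma>\<^sub>m\<^sub>i\<^sub>n(M)\<^sup>2\<close> is the minimum of the Rayleigh quotient of \<open>M\<^sup>T M\<close>, while
\<open>Y \<mapsto> \<bar>Y\<bar>\<close> is nonexpansive. As \<open>\<sigma>\<^sub>m\<^sub>i\<^sub>n(M) > 1\<close>, the map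
\<open>Y \<mapsto> M\<^sup>-\<^sup>1 (B\<^sup>-\<^sup>1 F - \<bar>Y\<bar>)\<close> is a contraction, and Banach's fixed point theorem gives
exactly one solution.\<close>

lemma linear_plus_nonexpansive_ex1:
  fixes L \<phi> :: "'a::euclidean_space \<Rightarrow> 'a"
  assumes "linear L" and "k > 1"
    and expanding: "\<And>x. k * norm x \<le> norm (L x)"
    and nonexpansive: "\<And>x y. norm (\<phi> x - \<phi> y) \<le> norm (x - y)"
  shows "\<exists>!x. L x + \<phi> x = g"
proof -
  have "inj L"
  proof (rule linear_injective_0[OF \<open>linear L\<close>, THEN iffD2], intro allI impI)
    fix x assume "L x = 0"
    then show "x = 0" using expanding[of x] \<open>k > 1\<close>
      by (smt (verit) mult_pos_pos zero_less_norm_iff)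
  qed
  then obtain R where "linear R" and LR: "\<And>y. L (R y) = y"
    using eucl.linear_inj_imp_surj \<open>linear L\<close> real_vector.linear_surjective_right_inverse
    by (metis comp_apply id_apply)
  have R_bound: "norm (R y) \<le> 1/k * norm y" for y
    using expanding[of "R y"] \<open>k > 1\<close> by (simp add: LR field_simps)
  define T where "T x = R (g - \<phi> x)" for x
  have "\<exists>!x. T x = x"
  proof (rule banach_fix_type)
    show "0 \<le> 1/k" "1/k < 1" using \<open>k > 1\<close> by auto
    show "\<forall>x y. dist (T x) (T y) \<le> 1/k * dist x y"
    proof (intro allI)
      fix x y
      have "dist (T x) (T y) = norm (R (\<phi> y - \<phi> x))"
        by (simp add: T_def dist_norm linear_diff[OF \<open>linear R\<close>, symmetric])
      also have "\<dots> \<le> 1/k * norm (\<phi> y - \<phi> x)" by (rule R_bound)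
      also have "\<dots> \<le> 1/k * dist x y"
        using nonexpansive[of y x] \<open>k > 1\<close>
        by (simp add: dist_norm norm_minus_commute divide_right_mono)
      finally show "dist (T x) (T y) \<le> 1/k * dist x y" .
    qed
  qed
  then obtain x where "T x = x" by blast
  then have "L x + \<phi> x = g" unfolding T_def by (metis LR diff_add_cancel)
  moreover have "x' = x''" if "L x' + \<phi> x' = g" "L x'' + \<phi> x'' = g" for x' x''
  proof -
    have "L (x' - x'') = \<phi> x'' - \<phi> x'"
      using that by (simp add: linear_diff[OF \<open>linear L\<close>] algebra_simps)
    then have "k * norm (x' - x'') \<le> 1 * norm (x' - x'')"
      using expanding[of "x' - x''"] nonexpansive[of x'' x'] by (simp add: norm_minus_commute)
    then have "norm (x' - x'') \<le> 0"
      using \<open>k > 1\<close> mult_le_cancel_right1[of "norm (x' - x'')" k] by auto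
    then show ?thesis by simp
  qed
  ultimately show ?thesis by blast
qed

lemma finite_eigenvalues_mat_symmetric:
  fixes S :: "real^'n^'n"
  assumes "transpose S = S"
  shows "finite (eigenvalues_mat S)"
proof -
  define E where "E = eigenvalues_mat S"
  define f where "f l = (SOME v. v \<noteq> 0 \<and> S *v v = l *\<^sub>R v)" for l
  have f: "f l \<noteq> 0 \<and> S *v f l = l *\<^sub>R f l" if "l \<in> E" for l
    unfolding f_def by (rule someI_ex) (use that in \<open>simp add: E_def eigenvalues_mat_def\<close>)
  have self_adjoint: "inner (S *v x) y = inner x (S *v y)" for x y
    by (metis assms dot_lmul_matrix inner_commute transpose_matrix_vector)
  have orthogonal: "inner (f l) (f l') = 0" if "l \<in> E" "l' \<in> E" "l \<noteq> l'" for l l'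
  proof -
    have "l * inner (f l) (f l') = inner (S *v f l) (f l')" using f[OF that(1)] by simp
    also have "\<dots> = inner (f l) (S *v f l')" by (rule self_adjoint)
    also have "\<dots> = l' * inner (f l) (f l')" using f[OF that(2)] by simp
    finally show ?thesis using that(3) by simp
  qed
  have "inj_on f E"
    by (rule inj_onI, rule ccontr) (metis f orthogonal inner_eq_zero_iff)
  moreover have "independent (f ` E)"
  proof (rule pairwise_orthogonal_independent)
    show "pairwise orthogonal (f ` E)"
      unfolding pairwise_def orthogonal_def using orthogonal by blast
    show "0 \<notin> f ` E" using f by auto
  qed
  then have "finite (f ` E)" using independent_bound by blast
  ultimately show ?thesis unfolding E_def using finite_imageD by blast
qed

lemma inner_transpose_mult_self:
  "inner ((transpose M ** M) *v x) y = inner ((M::real^'n^'m) *v x) (M *v y)"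
  by (metis dot_lmul_matrix matrix_vector_mul_assoc transpose_matrix_vector)

lemma eigenvalue_transpose_mult_self:
  fixes M :: "real^'n^'m"
  assumes "l \<in> eigenvalues_mat (transpose M ** M)"
  obtains v where "v \<noteq> 0" "l * (norm v)^2 = (norm (M *v v))^2"
proof -
  obtain v where v: "v \<noteq> 0" "(transpose M ** M) *v v = l *\<^sub>R v"
    using assms unfolding eigenvalues_mat_def by blast
  have "l * (norm v)^2 = inner ((transpose M ** M) *v v) v"
    using v by (simp add: power2_norm_eq_inner)
  also have "\<dots> = (norm (M *v v))^2"
    by (simp add: inner_transpose_mult_self power2_norm_eq_inner)
  finally show thesis using v that by blast
qed

lemma exists_min_norm_mult_on_sphere:
  fixes M :: "real^'n^'m"
  obtains v where "norm v = 1" "\<And>w. (norm (M *v v))^2 * (norm w)^2 \<le> (norm (M *v w))^2"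
proof -
  have "sphere (0::real^'n) 1 \<noteq> {}"
    using norm_axis_1[of undefined] by fastforce
  moreover have "continuous_on (sphere 0 1) (\<lambda>u. (norm (M *v u))^2)"
    by (intro continuous_intros)
  ultimately obtain v where v: "v \<in> sphere 0 1"
    and min: "\<And>u. u \<in> sphere 0 1 \<Longrightarrow> (norm (M *v v))^2 \<le> (norm (M *v u))^2"
    using continuous_attains_inf[OF compact_sphere] by blast
  show thesis
  proof (rule that)
    show "norm v = 1" using v by simp
    show "(norm (M *v v))^2 * (norm w)^2 \<le> (norm (M *v w))^2" for w
    proof (cases "w = 0")
      case False
      have "(norm (M *v v))^2 \<le> (norm (M *v ((1 / norm w) *\<^sub>R w)))^2"
        using False by (intro min) simp
      also have "\<dots> = (norm (M *v w))^2 / (norm w)^2"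
        by (simp add: matrix_vector_mult_scaleR power_divide)
      finally show ?thesis using False by (simp add: field_simps)
    qed simp
  qed
qed

lemma norm_add_scaleR_squared:
  fixes a b :: "'a::real_inner"
  shows "(norm (a + t *\<^sub>R b))^2 = (norm a)^2 + 2 * t * inner a b + t^2 * (norm b)^2"
proof -
  have "(norm (a + t *\<^sub>R b))^2 = inner (a + t *\<^sub>R b) (a + t *\<^sub>R b)"
    by (rule power2_norm_eq_inner)
  also have "\<dots> = inner a a + 2 * t * inner a b + t^2 * inner b b"
    by (simp add: inner_add_left inner_add_right inner_commute power2_eq_square)
  finally show ?thesis by (simp add: power2_norm_eq_inner)
qed

lemma min_norm_mult_on_sphere_eigenvector:
  fixes M :: "real^'n^'m" and v :: "real^'n"
  defines "\<mu> \<equiv> (norm (M *v v))^2"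
  assumes "norm v = 1" and min: "\<And>w. \<mu> * (norm w)^2 \<le> (norm (M *v w))^2"
  shows "(transpose M ** M) *v v = \<mu> *\<^sub>R v"
proof -
  have first_variation: "inner (M *v v) (M *v w) = \<mu> * inner v w" for w
  proof -
    define a where "a = inner (M *v v) (M *v w) - \<mu> * inner v w"
    define b where "b = (norm (M *v w))^2 - \<mu> * (norm w)^2"
    have "(norm (M *v (v + t *\<^sub>R w)))^2 - \<mu> * (norm (v + t *\<^sub>R w))^2 = 2 * t * a + t^2 * b"
      for t
      using \<open>norm v = 1\<close> unfolding a_def b_def \<mu>_def
      by (simp add: matrix_vector_right_distrib matrix_vector_mult_scaleR
          norm_add_scaleR_squared algebra_simps)
    then have nonneg: "0 \<le> 2 * t * a + t^2 * b" for t
      using min[of "v + t *\<^sub>R w"] by (metis diff_ge_0_iff_ge)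
    have "((\<lambda>t. 2 * t * a + t^2 * b) has_real_derivative 2 * a) (at 0)"
      by (auto intro!: derivative_eq_intros)
    then have "2 * a = 0"
      by (rule DERIV_local_min[where d = 1]) (simp_all add: nonneg)
    then show ?thesis unfolding a_def by simp
  qed
  have "inner ((transpose M ** M) *v v - \<mu> *\<^sub>R v) w = 0" for w
    using first_variation[of w] by (simp add: inner_transpose_mult_self inner_diff_left)
  from this[of "(transpose M ** M) *v v - \<mu> *\<^sub>R v"] show ?thesis by simp
qed

lemma Min_eigenvalues_transpose_mult_self:
  fixes M :: "real^'n^'m"
  shows "0 \<le> Min (eigenvalues_mat (transpose M ** M))"
    and "Min (eigenvalues_mat (transpose M ** M)) * (norm w)^2 \<le> (norm (M *v w))^2"
proof -
  define E where "E = eigenvalues_mat (transpose M ** M)"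
  obtain v where "norm v = 1" and min: "\<And>w. (norm (M *v v))^2 * (norm w)^2 \<le> (norm (M *v w))^2"
    using exists_min_norm_mult_on_sphere[of M] by blast
  then have "(transpose M ** M) *v v = (norm (M *v v))^2 *\<^sub>R v"
    by (intro min_norm_mult_on_sphere_eigenvector)
  moreover have "v \<noteq> 0" using \<open>norm v = 1\<close> by auto
  ultimately have "(norm (M *v v))^2 \<in> E"
    unfolding E_def eigenvalues_mat_def by blast
  moreover have "finite E"
    unfolding E_def by (rule finite_eigenvalues_mat_symmetric) (simp add: matrix_transpose_mul)
  moreover have "(norm (M *v v))^2 \<le> l" if "l \<in> E" for l
  proof -
    obtain u where "u \<noteq> 0" and l: "l * (norm u)^2 = (norm (M *v u))^2"
      using \<open>l \<in> E\<close> unfolding E_def by (rule eigenvalue_transpose_mult_self)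
    have "(norm (M *v v))^2 * (norm u)^2 \<le> l * (norm u)^2"
      using min[of u] l by simp
    moreover have "(norm u)^2 > 0" using \<open>u \<noteq> 0\<close> by simp
    ultimately show ?thesis by (rule mult_right_le_imp_le)
  qed
  ultimately have "Min E = (norm (M *v v))^2" by (intro Min_eqI) auto
  then show "0 \<le> Min E" "Min E * (norm w)^2 \<le> (norm (M *v w))^2"
    using min by auto
qed

lemma sigma_min_nonneg: "0 \<le> sigma_min M"
  unfolding sigma_min_def by (simp add: Min_eigenvalues_transpose_mult_self(1))

lemma sigma_min_mult_norm_le: "sigma_min M * norm v \<le> norm (M *v v)"
proof -
  have "sigma_min M * norm v = sqrt (Min (eigenvalues_mat (transpose M ** M)) * (norm v)^2)"
    unfolding sigma_min_def by (simp add: real_sqrt_mult)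
  also have "\<dots> \<le> sqrt ((norm (M *v v))^2)"
    by (intro real_sqrt_le_mono Min_eigenvalues_transpose_mult_self(2))
  finally show ?thesis by simp
qed

lemma norm_power2_matrix_columns:
  "(norm (Z::real^'n^'m))^2 = (\<Sum>j\<in>UNIV. (norm (column j Z))^2)"
proof -
  have "(norm Z)^2 = (\<Sum>i\<in>UNIV. \<Sum>j\<in>UNIV. Z$i$j * Z$i$j)"
    by (simp add: power2_norm_eq_inner inner_vec_def inner_real_def)
  also have "\<dots> = (\<Sum>j\<in>UNIV. \<Sum>i\<in>UNIV. Z$i$j * Z$i$j)" by (rule sum.swap)
  also have "\<dots> = (\<Sum>j\<in>UNIV. (norm (column j Z))^2)"
    by (simp add: power2_norm_eq_inner inner_vec_def inner_real_def column_def)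
  finally show ?thesis .
qed

lemma column_matrix_matrix_mult: "column j (M ** Z) = M *v column j Z"
  by (simp add: vec_eq_iff column_def matrix_matrix_mult_def matrix_vector_mult_def)

lemma sigma_min_mult_norm_le_matrix:
  fixes Z :: "real^'k^'n"
  shows "sigma_min M * norm Z \<le> norm (M ** Z)"
proof -
  have "(sigma_min M * norm Z)^2 = (\<Sum>j\<in>UNIV. (sigma_min M * norm (column j Z))^2)"
    by (simp add: power_mult_distrib norm_power2_matrix_columns sum_distrib_left)
  also have "\<dots> \<le> (\<Sum>j\<in>UNIV. (norm (M *v column j Z))^2)"
    by (intro sum_mono power_mono sigma_min_mult_norm_le)
      (simp add: sigma_min_nonneg)
  also have "\<dots> = (norm (M ** Z))^2"
    by (simp add: norm_power2_matrix_columns column_matrix_matrix_mult)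
  finally show ?thesis by (rule power2_le_imp_le) simp
qed

lemma norm_mat_abs_diff_le: "norm (mat_abs Z - mat_abs W) \<le> norm (Z - W)"
  unfolding mat_abs_def
  by (intro norm_le_componentwise_cart) (simp add: abs_triangle_ineq3)

lemma linear_matrix_matrix_mult_left: "linear (\<lambda>Z. (M::real^'n^'m) ** (Z::real^'k^'n))"
  by (rule linearI)
    (simp add: matrix_add_ldistrib,
     simp add: vec_eq_iff matrix_matrix_mult_def sum_distrib_left algebra_simps)

lemma matrix_inv_cancel:
  assumes "invertible (A::'a::semiring_1^'n^'n)"
  shows "A ** matrix_inv A = mat 1" and "matrix_inv A ** A = mat 1"
proof -
  have "A ** matrix_inv A = mat 1 \<and> matrix_inv A ** A = mat 1"
    unfolding matrix_inv_def by (rule someI_ex) (use assms in \<open>simp add: invertible_def\<close>)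
  then show "A ** matrix_inv A = mat 1" "matrix_inv A ** A = mat 1" by auto
qed

lemma ex1_invertible_matrix_mult_iff:
  fixes C :: "'a::semiring_1^'n^'n"
  assumes "invertible C"
  shows "(\<exists>!X::'a^'k^'n. P (C ** X)) \<longleftrightarrow> (\<exists>!Y. P Y)"
proof -
  have left: "matrix_inv C ** (C ** X) = X" and right: "C ** (matrix_inv C ** Y) = Y"
    for X Y :: "'a^'k^'n"
    using matrix_inv_cancel[OF assms] by (simp_all add: matrix_mul_assoc)
  show ?thesis by (metis left right)
qed

lemma invertible_matrix_mult_left_eq_iff:
  fixes B :: "'a::semiring_1^'n^'n"
  assumes "invertible B"
  shows "B ** X = F \<longleftrightarrow> X = matrix_inv B ** F"
  using matrix_inv_cancel[OF assms] by (auto simp: matrix_mul_assoc)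

theorem corollary4p1:
  fixes A B C F :: "real^'n^'n"
  assumes "invertible B" and "invertible C"
    and "sigma_min (matrix_inv B ** A ** matrix_inv C) > 1"
  shows "\<exists>!X :: real^'n^'n. A ** X + B ** mat_abs (C ** X) = F"
proof -
  define M where "M = matrix_inv B ** A ** matrix_inv C"
  have "\<exists>!Y. M ** Y + mat_abs Y = matrix_inv B ** F"
    using linear_matrix_matrix_mult_left assms(3)[folded M_def]
      sigma_min_mult_norm_le_matrix norm_mat_abs_diff_le
    by (rule linear_plus_nonexpansive_ex1)
  moreover have "A ** X + B ** mat_abs (C ** X) = F \<longleftrightarrow>
      M ** (C ** X) + mat_abs (C ** X) = matrix_inv B ** F" for X
  proof -
    have "A ** X = B ** (M ** (C ** X))"
      unfolding M_def using matrix_inv_cancel[OF assms(1)] matrix_inv_cancel[OF assms(2)]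
      by (metis matrix_mul_assoc matrix_mul_lid matrix_mul_rid)
    then show ?thesis
      by (simp add: matrix_add_ldistrib[symmetric] invertible_matrix_mult_left_eq_iff[OF assms(1)])
  qed
  ultimately show ?thesis
    using ex1_invertible_matrix_mult_iff[OF assms(2),
        of "\<lambda>Y. M ** Y + mat_abs Y = matrix_inv B ** F"] by simp
qed

end
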